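(* Fix $\lambda_t \in \mathbb{R}^m_+$. For each deterministic policy $\pi \in \Pi$ define $\mathcal{T}^\pi:\mathbb{R}^{\mathcal{S}}\to\mathbb{R}^{\mathcal{S}}$ by $$[\mathcal{T}^{\pi} v](s) = (r - \lambda_t^{\top}g)(s, \pi(s)) + \gamma \langle P^o_{s, \pi(s)}, v \rangle + \gamma \min_{P \in \mathcal{P}} \langle P_{s, \pi(s)} - P^o_{s, \pi(s)}, V^{\pi}_{r} \rangle - \gamma \lambda_t^{\top} \min_{P \in \mathcal{P}} \langle P_{s, \pi(s)} - P^o_{s, \pi(s)}, V^{\pi}_{g} \rangle,$$ where $(r-\lambda_t^\top g)(s,a) = r(s,a) - \lambda_t^\top g(s,a)$ and the second minimum is taken componentwise over $g_1,\dots,g_m$, and define $[\mathcal{T}^* v](s) = \max_{\pi \in \Pi}[\mathcal{T}^\pi v](s)$. Then: (1) (Monotonicity) if $v_1,v_2 \in \mathbb{R}^{\mathcal{S}}$ with $v_1 \ge v_2$ componentwise, then $\mathcal{T}^\pi v_1 \ge \mathcal{T}^\pi v_2$ and $\mathcal{T}^* v_1 \ge \mathcal{T}^* v_2$; (2) (Transition invariance) for every $c\in\mathbb{R}$, $\mathcal{T}^\pi(v + c\mathbf{1}) = \mathcal{T}^\pi v + \gamma c\mathbf{1}$ and $\mathcal{T}^*(v + c\mathbf{1}) = \mathcal{T}^* v + \gamma c\mathbf{1}$; (3) (Contraction) $\mathcal{T}^\pi$ and $\mathcal{T}^*$ are $\gamma$-contractions in $\|\cdot\|_\infty$, and $V^\pi_r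 - \lambda_t^\top V^\pi_g$ is the unique fixed point of $\mathcal{T}^\pi$.
   Context: $\mathcal{S},\mathcal{A}$ are finite, $\gamma\in[0,1)$. $P^o = (P^o_{s,a})$ is a nominal kernel, and $\mathcal{P} = \otimes_{(s,a)}\mathcal{P}_{s,a}$ is an $(s,a)$-rectangular uncertainty set with $\mathcal{P}_{s,a} = \{P\in\Delta(\mathcal{S}) : D(P,P^o_{s,a})\le\beta_{s,a}\}$ for a function $D$ and levels $\beta_{s,a}$ (minima over these sets taken to be attained); $\min_{P\in\mathcal{P}}\langle P_{s,a}, w\rangle$ means $\min_{P_{s,a}\in\mathcal{P}_{s,a}}\langle P_{s,a},w\rangle$. $r:\mathcal{S}\times\mathcal{A}\to[0,\bar R]$ is a reward, $g=(g_1,\dots,g_m)$ with $g_i:\mathcal{S}\times\mathcal{A}\to[0,\tau_i]$ are constraint rewards. $\Pi$ is the set of deterministic stationary policies $\pi:\mathcal{S}\to\mathcal{A}$. For a reward $u$, $V^\pi_u(s) = \min_{\mathcal{K}\in\otimes_{t\ge0}\mathcal{P}}\mathbb{E}_{\mathcal{K}}[\sum_{t\ge0}\gamma^t u(s_t,a_t)\mid s_0=s,\pi]$ is the robust value function (worst case over sequences of kernels from $\mathcal{P}$, one per time step); $V^\pi_g = (V^\pi_{g_1},\dots,V^\pi_{g_m})^\top$. In the definition of $\mathcal{T}^\pi$, $V^\pi_r$ and $V^\pi_g$ are fixed (they depend on $\pi$, not on $v$). *)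

theory Defs
  imports "HOL-Analysis.Analysis"
begin

definition prob_simplex :: "('s::finite \<Rightarrow> real) set" where
  "prob_simplex = {p. (\<forall>s. 0 \<le> p s) \<and> sum p UNIV = 1}"

definition inner_s :: "('s::finite \<Rightarrow> real) \<Rightarrow> ('s \<Rightarrow> real) \<Rightarrow> real" where
  "inner_s p w = (\<Sum>s'\<in>UNIV. p s' * w s')"

definition Pset :: "(('s::finite \<Rightarrow> real) \<Rightarrow> ('s \<Rightarrow> real) \<Rightarrow> real) \<Rightarrow> ('s \<Rightarrow> 'a \<Rightarrow> real)
    \<Rightarrow> ('s \<Rightarrow> 'a \<Rightarrow> 's \<Rightarrow> real) \<Rightarrow> 's \<Rightarrow> 'a \<Rightarrow> ('s \<Rightarrow> real) set" where
  "Pset D \<beta> Po s a = {p \<in> prob_simplex. D p (Po s a) \<le> \<beta> s a}"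

definition diff_min where
  "diff_min D \<beta> Po s a w =
     Inf ((\<lambda>p. inner_s (\<lambda>s'. p s' - Po s a s') w) ` Pset D \<beta> Po s a)"

fun occ :: "(nat \<Rightarrow> 's::finite \<Rightarrow> 'a \<Rightarrow> 's \<Rightarrow> real) \<Rightarrow> ('s \<Rightarrow> 'a) \<Rightarrow> 's \<Rightarrow> nat \<Rightarrow> 's \<Rightarrow> real" where
  "occ K \<pi> s0 0 s' = (if s' = s0 then 1 else 0)"
| "occ K \<pi> s0 (Suc t) s' = (\<Sum>s\<in>UNIV. occ K \<pi> s0 t s * K t s (\<pi> s) s')"

definition disc_return :: "real \<Rightarrow> (nat \<Rightarrow> 's::finite \<Rightarrow> 'a \<Rightarrow> 's \<Rightarrow> real) \<Rightarrow> ('s \<Rightarrow> 'a)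
    \<Rightarrow> ('s \<Rightarrow> 'a \<Rightarrow> real) \<Rightarrow> 's \<Rightarrow> real" where
  "disc_return \<gamma> K \<pi> u s0 = (\<Sum>t. \<gamma> ^ t * (\<Sum>s\<in>UNIV. occ K \<pi> s0 t s * u s (\<pi> s)))"

text \<open>Kernel sequences from the rectangular set, one kernel per time step.\<close>
definition admissible where
  "admissible D \<beta> Po K = (\<forall>t s a. K t s a \<in> Pset D \<beta> Po s a)"

definition robust_V where
  "robust_V D \<beta> Po \<gamma> \<pi> u s =
     Inf {disc_return \<gamma> K \<pi> u s | K. admissible D \<beta> Po K}"

text \<open>The operator T^pi (lambda_t given as lam, constraints g 0 .. g (m-1)).\<close>
definition Tpi where
  "Tpi D \<beta> Po \<gamma> r g m lam \<pi> v s =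
     (r s (\<pi> s) - (\<Sum>i<m. lam i * g i s (\<pi> s)))
     + \<gamma> * inner_s (Po s (\<pi> s)) v
     + \<gamma> * diff_min D \<beta> Po s (\<pi> s) (robust_V D \<beta> Po \<gamma> \<pi> r)
     - \<gamma> * (\<Sum>i<m. lam i * diff_min D \<beta> Po s (\<pi> s) (robust_V D \<beta> Po \<gamma> \<pi> (g i)))"

definition Tstar where
  "Tstar D \<beta> Po \<gamma> r g m lam v s =
     Max (range (\<lambda>\<pi>::'s::finite \<Rightarrow> 'a::finite. Tpi D \<beta> Po \<gamma> r g m lam \<pi> v s))"

definition supnorm :: "('s::finite \<Rightarrow> real) \<Rightarrow> real" where
  "supnorm f = Max (range (\<lambda>s. \<bar>f s\<bar>))"

end

theory Submission
  imports Defs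
begin

(* The operator T^pi is an affine map v |-> c_pi + gamma P^o_pi v whose linear part is a
   stochastic matrix scaled by gamma; monotonicity, translation and gamma-contraction are
   immediate, and they pass to T^* because a pointwise maximum of such maps preserves all three.
   The fixed point claim rests on the robust Bellman equation
   V^pi_u(s) = u(s, pi s) + gamma min_{P in P_(s, pi s)} <P, V^pi_u>: the robust Bellman operator is a
   gamma-contraction, and telescoping the discounted return against its fixed point V shows that
   every admissible kernel sequence earns at least V, while the stationary worst-case kernel earns
   exactly V. Substituting these equations for r and the g_i into T^pi, the nominal terms cancel. *)

lemma inner_s_diff_right: "inner_s p (\<lambda>s. w s - w' s) = inner_s p w - inner_s p w'"
  by (simp add: inner_s_def sum_subtractf right_diff_distrib)

lemma inner_s_diff_left: "inner_s (\<lambda>s. p s - q s) w = inner_s p w - inner_s q w"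
  by (simp add: inner_s_def sum_subtractf left_diff_distrib)

lemma inner_s_add_right: "inner_s p (\<lambda>s. w s + w' s) = inner_s p w + inner_s p w'"
  by (simp add: inner_s_def sum.distrib distrib_left)

lemma inner_s_mult_right: "inner_s p (\<lambda>s. c * w s) = c * inner_s p w"
  by (simp add: inner_s_def sum_distrib_left mult_ac)

lemma inner_s_lincomb:
  "inner_s p (\<lambda>s. w s - (\<Sum>i<m. c i * w' i s)) = inner_s p w - (\<Sum>i<m. c i * inner_s p (w' i))"
proof -
  have "(\<Sum>s\<in>UNIV. p s * (\<Sum>i<m. c i * w' i s)) = (\<Sum>i<m. c i * (\<Sum>s\<in>UNIV. p s * w' i s))"
    unfolding sum_distrib_left by (subst sum.swap) (simp add: mult_ac)
  then show ?thesis by (simp add: inner_s_def right_diff_distrib sum_subtractf)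
qed

lemma inner_s_const: "p \<in> prob_simplex \<Longrightarrow> inner_s p (\<lambda>_. c) = c"
  unfolding inner_s_def prob_simplex_def by (simp add: sum_distrib_right[symmetric])

lemma inner_s_mono: "(\<And>s. 0 \<le> p s) \<Longrightarrow> (\<And>s. w s \<le> w' s) \<Longrightarrow> inner_s p w \<le> inner_s p w'"
  unfolding inner_s_def by (intro sum_mono mult_left_mono) auto

lemma inner_s_nonneg: "p \<in> prob_simplex \<Longrightarrow> (\<And>s. 0 \<le> w s) \<Longrightarrow> 0 \<le> inner_s p w"
  using inner_s_mono[of p "\<lambda>_. 0" w] by (simp add: prob_simplex_def inner_s_def)

lemma abs_inner_s_le:
  assumes "p \<in> prob_simplex" "\<And>s. \<bar>w s\<bar> \<le> d"
  shows "\<bar>inner_s p w\<bar> \<le> d"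
proof -
  have "0 \<le> p s" "w s \<le> d" "- d \<le> w s" for s
    using assms(1) assms(2)[of s] by (auto simp: prob_simplex_def abs_le_iff)
  then have "inner_s p w \<le> inner_s p (\<lambda>_. d)" "inner_s p (\<lambda>_. - d) \<le> inner_s p w"
    by (auto intro!: inner_s_mono)
  then show ?thesis using inner_s_const[OF assms(1)] by (simp add: abs_le_iff)
qed

lemma abs_le_supnorm: "\<bar>f s\<bar> \<le> supnorm f"
  unfolding supnorm_def by (rule Max_ge) auto

lemma supnorm_le: "(\<And>s. \<bar>f s\<bar> \<le> d) \<Longrightarrow> supnorm f \<le> d"
  unfolding supnorm_def by (subst Max_le_iff) auto

lemma Max_range_mono:
  fixes f g :: "'b::finite \<Rightarrow> 'c::linorder"
  shows "(\<And>x. f x \<le> g x) \<Longrightarrow> Max (range f) \<le> Max (range g)"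
proof -
  assume "\<And>x. f x \<le> g x"
  moreover have "g x \<le> Max (range g)" for x by simp
  ultimately have "f x \<le> Max (range g)" for x by (meson order_trans)
  then show ?thesis by (subst Max_le_iff) auto
qed

lemma Max_range_add_const:
  fixes f :: "'b::finite \<Rightarrow> real"
  shows "Max (range (\<lambda>x. f x + c)) = Max (range f) + c"
  using Max_add_commute[of UNIV f c] by simp

lemma abs_Max_range_diff_le:
  fixes f g :: "'b::finite \<Rightarrow> real"
  assumes "\<And>x. \<bar>f x - g x\<bar> \<le> d"
  shows "\<bar>Max (range f) - Max (range g)\<bar> \<le> d"
proof -
  have "f x \<le> g x + d" "g x \<le> f x + d" for x using assms[of x] by (simp_all add: abs_le_iff)
  then have "Max (range f) \<le> Max (range (\<lambda>x. g x + d))" "Max (range g) \<le> Max (range (\<lambda>x. f x + d))"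
    by (simp_all only: Max_range_mono)
  then show ?thesis unfolding Max_range_add_const abs_le_iff by linarith
qed

definition sup_contraction :: "real \<Rightarrow> (('s \<Rightarrow> real) \<Rightarrow> ('s \<Rightarrow> real)) \<Rightarrow> bool" where
  "sup_contraction \<gamma> F \<longleftrightarrow>
     (\<forall>w w' d. (\<forall>s. \<bar>w s - w' s\<bar> \<le> d) \<longrightarrow> (\<forall>s. \<bar>F w s - F w' s\<bar> \<le> \<gamma> * d))"

lemma sup_contractionI:
  "(\<And>w w' d s. (\<And>s. \<bar>w s - w' s\<bar> \<le> d) \<Longrightarrow> \<bar>F w s - F w' s\<bar> \<le> \<gamma> * d) \<Longrightarrow> sup_contraction \<gamma> F"
  unfolding sup_contraction_def by blast

lemma sup_contractionD:
  "sup_contraction \<gamma> F \<Longrightarrow> (\<And>s. \<bar>w s - w' s\<bar> \<le> d) \<Longrightarrow> \<bar>F w s - F w' s\<bar> \<le> \<gamma> * d"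
  unfolding sup_contraction_def by blast

lemma supnorm_sup_contraction:
  fixes F :: "('s::finite \<Rightarrow> real) \<Rightarrow> ('s \<Rightarrow> real)"
  assumes "sup_contraction \<gamma> F"
  shows "supnorm (\<lambda>s. F w s - F w' s) \<le> \<gamma> * supnorm (\<lambda>s. w s - w' s)"
  by (intro supnorm_le sup_contractionD[OF assms] abs_le_supnorm)

lemma sup_contraction_Max:
  fixes F :: "'b::finite \<Rightarrow> ('s \<Rightarrow> real) \<Rightarrow> ('s \<Rightarrow> real)"
  assumes "\<And>\<pi>. sup_contraction \<gamma> (F \<pi>)"
  shows "sup_contraction \<gamma> (\<lambda>w s. Max (range (\<lambda>\<pi>. F \<pi> w s)))"
  by (intro sup_contractionI abs_Max_range_diff_le sup_contractionD[OF assms])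

lemma sup_contraction_fixpoint_unique:
  fixes F :: "('s::finite \<Rightarrow> real) \<Rightarrow> ('s \<Rightarrow> real)"
  assumes "sup_contraction \<gamma> F" "\<gamma> < 1" "F v = v" "F w = w"
  shows "v = w"
proof -
  let ?n = "supnorm (\<lambda>s. v s - w s)"
  have "?n \<le> \<gamma> * ?n" using supnorm_sup_contraction[OF assms(1), of v w] assms(3,4) by simp
  then have "(1 - \<gamma>) * ?n \<le> 0" by (simp add: algebra_simps)
  then have "?n \<le> 0" using assms(2) by (simp add: mult_le_0_iff)
  then have "\<bar>v s - w s\<bar> \<le> 0" for s using abs_le_supnorm[of "\<lambda>s. v s - w s" s] by linarith
  then show ?thesis by (simp add: fun_eq_iff)
qed

lemma sup_contraction_has_fixpoint:
  fixes F :: "('s::finite \<Rightarrow> real) \<Rightarrow> ('s \<Rightarrow> real)"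
  assumes F: "sup_contraction \<gamma> F" and "0 \<le> \<gamma>" "\<gamma> < 1"
  obtains V where "F V = V"
proof -
  define x where "x n = (F ^^ n) (\<lambda>_. 0)" for n
  define M where "M = supnorm (\<lambda>s. x 1 s - x 0 s)"
  have x_Suc: "x (Suc n) = F (x n)" for n by (simp add: x_def)
  have step: "\<bar>x (Suc n) s - x n s\<bar> \<le> \<gamma>^n * M" for n s
  proof (induction n arbitrary: s)
    case 0 then show ?case using abs_le_supnorm[of "\<lambda>s. x 1 s - x 0 s"] by (simp add: M_def)
  next
    case (Suc n) then show ?case
      unfolding x_Suc[of "Suc n"] x_Suc[of n] using sup_contractionD[OF F] by (simp add: mult.assoc)
  qed
  have geom: "summable (\<lambda>n. \<gamma>^n * M)"
    using assms(2,3) by (intro summable_mult2 summable_geometric) simp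
  define V where "V s = (\<Sum>n. x (Suc n) s - x n s)" for s
  have x_to_V: "(\<lambda>n. x n s) \<longlonglongrightarrow> V s" for s
  proof -
    have "summable (\<lambda>n. x (Suc n) s - x n s)"
      by (rule summable_comparison_test[OF _ geom]) (use step in auto)
    moreover have "(\<Sum>j<n. x (Suc j) s - x j s) = x n s" for n
      by (subst sum_lessThan_telescope) (simp add: x_def)
    ultimately show ?thesis unfolding V_def using summable_LIMSEQ by fastforce
  qed
  have "F V s = V s" for s
  proof -
    have bound: "norm (F (x n) s - F V s) \<le> \<gamma> * (\<Sum>s'\<in>UNIV. \<bar>x n s' - V s'\<bar>)" for n
      unfolding real_norm_def by (rule sup_contractionD[OF F], rule member_le_sum) auto
    have "(\<lambda>n. \<Sum>s'\<in>UNIV. \<bar>x n s' - V s'\<bar>) \<longlonglongrightarrow> 0"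
      by (rule tendsto_null_sum) (simp add: tendsto_rabs_zero_iff LIM_zero_iff x_to_V)
    then have "(\<lambda>n. F (x n) s - F V s) \<longlonglongrightarrow> 0"
      by (rule Lim_null_comparison[OF always_eventually[OF allI[OF bound]] tendsto_mult_right_zero])
    then have "(\<lambda>n. x (Suc n) s) \<longlonglongrightarrow> F V s" unfolding x_Suc by (simp add: LIM_zero_iff)
    then show ?thesis using LIMSEQ_Suc[OF x_to_V] LIMSEQ_unique by blast
  qed
  then show ?thesis using that by blast
qed

lemma occ_in_prob_simplex:
  assumes "\<And>t s a. K t s a \<in> prob_simplex"
  shows "occ K \<pi> s0 t \<in> prob_simplex"
proof (induction t)
  case 0 then show ?case by (simp add: prob_simplex_def)
next
  case (Suc t)
  have "(\<Sum>s'\<in>UNIV. \<Sum>s\<in>UNIV. occ K \<pi> s0 t s * K t s (\<pi> s) s')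
      = (\<Sum>s\<in>UNIV. occ K \<pi> s0 t s * (\<Sum>s'\<in>UNIV. K t s (\<pi> s) s'))"
    by (subst sum.swap) (simp add: sum_distrib_left)
  also have "\<dots> = 1" using assms Suc by (simp add: prob_simplex_def)
  finally show ?case using Suc assms by (auto simp: prob_simplex_def intro!: sum_nonneg)
qed

lemma inner_s_occ_0: "inner_s (occ K \<pi> s0 0) w = w s0"
proof -
  have "(\<Sum>s\<in>UNIV. occ K \<pi> s0 0 s * w s) = (\<Sum>s\<in>UNIV. if s = s0 then w s0 else 0)"
    by (rule sum.cong) auto
  then show ?thesis by (simp add: inner_s_def)
qed

lemma inner_s_occ_Suc:
  "inner_s (occ K \<pi> s0 (Suc t)) w = inner_s (occ K \<pi> s0 t) (\<lambda>s. inner_s (K t s (\<pi> s)) w)"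
  unfolding inner_s_def occ.simps sum_distrib_right sum_distrib_left
  by (subst sum.swap) (simp add: mult_ac)

lemma disc_partial_sum_telescope:
  "(\<Sum>t<n. \<gamma>^t * inner_s (occ K \<pi> s0 t) (\<lambda>s. u s (\<pi> s))) + \<gamma>^n * inner_s (occ K \<pi> s0 n) w
   = w s0 + (\<Sum>t<n. \<gamma>^t * inner_s (occ K \<pi> s0 t)
                              (\<lambda>s. u s (\<pi> s) + \<gamma> * inner_s (K t s (\<pi> s)) w - w s))"
proof (induction n)
  case 0 then show ?case by (simp add: inner_s_occ_0 del: occ.simps)
next
  case (Suc n)
  let ?I = "inner_s (occ K \<pi> s0 n)"
  have lin: "?I (\<lambda>s. u s (\<pi> s) + \<gamma> * inner_s (K n s (\<pi> s)) w - w s)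
      = ?I (\<lambda>s. u s (\<pi> s)) + \<gamma> * inner_s (occ K \<pi> s0 (Suc n)) w - ?I w"
    by (simp only: inner_s_diff_right inner_s_add_right inner_s_mult_right inner_s_occ_Suc)
  have "\<gamma>^n * ?I (\<lambda>s. u s (\<pi> s) + \<gamma> * inner_s (K n s (\<pi> s)) w - w s)
      = \<gamma>^n * ?I (\<lambda>s. u s (\<pi> s)) + \<gamma>^Suc n * inner_s (occ K \<pi> s0 (Suc n)) w - \<gamma>^n * ?I w"
    unfolding lin by (simp add: algebra_simps)
  then show ?case unfolding sum.lessThan_Suc using Suc.IH by linarith
qed

lemma disc_return_limit:
  assumes K: "\<And>t s a. K t s a \<in> prob_simplex" and "0 \<le> \<gamma>" "\<gamma> < 1"
  shows "(\<lambda>n. (\<Sum>t<n. \<gamma>^t * inner_s (occ K \<pi> s0 t) (\<lambda>s. u s (\<pi> s)))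
               + \<gamma>^n * inner_s (occ K \<pi> s0 n) w) \<longlonglongrightarrow> disc_return \<gamma> K \<pi> u s0"
proof -
  have occ: "occ K \<pi> s0 t \<in> prob_simplex" for t by (rule occ_in_prob_simplex[OF K])
  have geom: "summable (\<lambda>t. \<gamma>^t)" using assms(2,3) by simp
  have "summable (\<lambda>t. \<gamma>^t * inner_s (occ K \<pi> s0 t) (\<lambda>s. u s (\<pi> s)))"
  proof (rule summable_comparison_test[OF _ summable_mult2[OF geom]])
    show "\<exists>N. \<forall>t\<ge>N. norm (\<gamma>^t * inner_s (occ K \<pi> s0 t) (\<lambda>s. u s (\<pi> s)))
                     \<le> \<gamma>^t * supnorm (\<lambda>s. u s (\<pi> s))"
      using assms(2) by (auto simp: abs_mult intro!: mult_left_mono abs_inner_s_le occ abs_le_supnorm)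
  qed
  then have "(\<lambda>n. \<Sum>t<n. \<gamma>^t * inner_s (occ K \<pi> s0 t) (\<lambda>s. u s (\<pi> s))) \<longlonglongrightarrow> disc_return \<gamma> K \<pi> u s0"
    unfolding disc_return_def inner_s_def by (rule summable_LIMSEQ)
  moreover have "(\<lambda>n. \<gamma>^n * inner_s (occ K \<pi> s0 n) w) \<longlonglongrightarrow> 0"
  proof (rule Lim_null_comparison)
    show "\<forall>\<^sub>F n in sequentially. norm (\<gamma>^n * inner_s (occ K \<pi> s0 n) w) \<le> \<gamma>^n * supnorm w"
      using assms(2) by (intro always_eventually allI) (auto simp: abs_mult intro!: mult_left_mono abs_inner_s_le occ abs_le_supnorm)
    show "(\<lambda>n. \<gamma>^n * supnorm w) \<longlonglongrightarrow> 0"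
      using assms(2,3) by (intro tendsto_mult_left_zero LIMSEQ_power_zero) simp
  qed
  ultimately show ?thesis using tendsto_add by fastforce
qed

definition worst_inner ::
    "(('s::finite \<Rightarrow> real) \<Rightarrow> ('s \<Rightarrow> real) \<Rightarrow> real) \<Rightarrow> ('s \<Rightarrow> 'a \<Rightarrow> real)
     \<Rightarrow> ('s \<Rightarrow> 'a \<Rightarrow> 's \<Rightarrow> real) \<Rightarrow> 's \<Rightarrow> 'a \<Rightarrow> ('s \<Rightarrow> real) \<Rightarrow> real" where
  "worst_inner D \<beta> Po s a w = Inf ((\<lambda>p. inner_s p w) ` Pset D \<beta> Po s a)"

definition robust_bellman where
  "robust_bellman D \<beta> Po \<gamma> \<pi> u w s = u s (\<pi> s) + \<gamma> * worst_inner D \<beta> Po s (\<pi> s) w"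

lemma worst_inner_eqI:
  assumes "p \<in> Pset D \<beta> Po s a" "\<And>q. q \<in> Pset D \<beta> Po s a \<Longrightarrow> inner_s p w \<le> inner_s q w"
  shows "worst_inner D \<beta> Po s a w = inner_s p w"
  unfolding worst_inner_def using assms by (intro cInf_eq_minimum) auto

locale robust_mdp =
  fixes D :: "('s::finite \<Rightarrow> real) \<Rightarrow> ('s \<Rightarrow> real) \<Rightarrow> real"
    and \<beta> :: "'s \<Rightarrow> 'a::finite \<Rightarrow> real"
    and Po :: "'s \<Rightarrow> 'a \<Rightarrow> 's \<Rightarrow> real"
    and \<gamma> :: real
  assumes discount: "0 \<le> \<gamma>" "\<gamma> < 1"
    and attained: "\<And>s a w. \<exists>p\<in>Pset D \<beta> Po s a. \<forall>q\<in>Pset D \<beta> Po s a. inner_s p w \<le> inner_s q w"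
begin

lemma worst_inner_attained:
  obtains p where "p \<in> Pset D \<beta> Po s a" "inner_s p w = worst_inner D \<beta> Po s a w"
proof -
  obtain p where p: "p \<in> Pset D \<beta> Po s a" "\<forall>q\<in>Pset D \<beta> Po s a. inner_s p w \<le> inner_s q w"
    using attained by blast
  then have "worst_inner D \<beta> Po s a w = inner_s p w" by (intro worst_inner_eqI) auto
  then show thesis using that p(1) by simp
qed

lemma worst_inner_le:
  assumes "q \<in> Pset D \<beta> Po s a"
  shows "worst_inner D \<beta> Po s a w \<le> inner_s q w"
proof -
  obtain p where p: "p \<in> Pset D \<beta> Po s a" "\<forall>q\<in>Pset D \<beta> Po s a. inner_s p w \<le> inner_s q w"
    using attained by blast
  then have "worst_inner D \<beta> Po s a w = inner_s p w" by (intro worst_inner_eqI) auto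
  then show ?thesis using assms p(2) by simp
qed

lemma diff_min_eq_worst_inner:
  "diff_min D \<beta> Po s a w = worst_inner D \<beta> Po s a w - inner_s (Po s a) w"
  unfolding diff_min_def inner_s_diff_left
proof (rule cInf_eq_minimum)
  obtain p where p: "p \<in> Pset D \<beta> Po s a" "inner_s p w = worst_inner D \<beta> Po s a w"
    by (rule worst_inner_attained)
  show "worst_inner D \<beta> Po s a w - inner_s (Po s a) w
      \<in> (\<lambda>p. inner_s p w - inner_s (Po s a) w) ` Pset D \<beta> Po s a"
    by (rule image_eqI[OF _ p(1)]) (simp add: p(2))
qed (auto simp: worst_inner_le)

lemma abs_worst_inner_diff_le:
  assumes "\<And>s. \<bar>w s - w' s\<bar> \<le> d"
  shows "\<bar>worst_inner D \<beta> Po s a w - worst_inner D \<beta> Po s a w'\<bar> \<le> d"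
proof -
  obtain p where p: "p \<in> Pset D \<beta> Po s a" "inner_s p w = worst_inner D \<beta> Po s a w"
    by (rule worst_inner_attained)
  obtain p' where p': "p' \<in> Pset D \<beta> Po s a" "inner_s p' w' = worst_inner D \<beta> Po s a w'"
    by (rule worst_inner_attained)
  have bound: "\<bar>inner_s q (\<lambda>s. w s - w' s)\<bar> \<le> d" if "q \<in> Pset D \<beta> Po s a" for q
    using that by (intro abs_inner_s_le assms) (simp add: Pset_def)
  have "worst_inner D \<beta> Po s a w - worst_inner D \<beta> Po s a w' \<le> inner_s p' (\<lambda>s. w s - w' s)"
    using worst_inner_le[OF p'(1), of w] p'(2) by (simp add: inner_s_diff_right)
  moreover have "inner_s p (\<lambda>s. w s - w' s) \<le> worst_inner D \<beta> Po s a w - worst_inner D \<beta> Po s a w'"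
    using worst_inner_le[OF p(1), of w'] p(2) by (simp add: inner_s_diff_right)
  ultimately show ?thesis using bound[OF p(1)] bound[OF p'(1)] by (simp add: abs_le_iff)
qed

lemma robust_bellman_sup_contraction: "sup_contraction \<gamma> (robust_bellman D \<beta> Po \<gamma> \<pi> u)"
proof (rule sup_contractionI)
  fix w w' :: "'s \<Rightarrow> real" and d s
  assume "\<And>s. \<bar>w s - w' s\<bar> \<le> d"
  then have "\<bar>worst_inner D \<beta> Po s (\<pi> s) w - worst_inner D \<beta> Po s (\<pi> s) w'\<bar> \<le> d"
    by (rule abs_worst_inner_diff_le)
  then show "\<bar>robust_bellman D \<beta> Po \<gamma> \<pi> u w s - robust_bellman D \<beta> Po \<gamma> \<pi> u w' s\<bar> \<le> \<gamma> * d"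
    using discount(1)
    by (simp add: robust_bellman_def right_diff_distrib[symmetric] abs_mult mult_left_mono)
qed

lemma admissible_prob_simplex: "admissible D \<beta> Po K \<Longrightarrow> K t s a \<in> prob_simplex"
  by (simp add: admissible_def Pset_def)

lemma robust_V_eq_fixpoint:
  assumes V_fix: "robust_bellman D \<beta> Po \<gamma> \<pi> u V = V"
  shows "robust_V D \<beta> Po \<gamma> \<pi> u = V"
proof (rule ext)
  fix s0
  let ?S = "\<lambda>K n. (\<Sum>t<n. \<gamma>^t * inner_s (occ K \<pi> s0 t) (\<lambda>s. u s (\<pi> s)))
                   + \<gamma>^n * inner_s (occ K \<pi> s0 n) V"
  have V: "V s = u s (\<pi> s) + \<gamma> * worst_inner D \<beta> Po s (\<pi> s) V" for s
    using fun_cong[OF V_fix, of s] by (simp add: robust_bellman_def)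
  have S_eq: "?S K n = V s0 + (\<Sum>t<n. \<gamma>^t * inner_s (occ K \<pi> s0 t)
                  (\<lambda>s. \<gamma> * (inner_s (K t s (\<pi> s)) V - worst_inner D \<beta> Po s (\<pi> s) V)))" for K n
  proof -
    have "u s (\<pi> s) + \<gamma> * inner_s (K t s (\<pi> s)) V - V s
        = \<gamma> * (inner_s (K t s (\<pi> s)) V - worst_inner D \<beta> Po s (\<pi> s) V)" for t s
      using V[of s] by (simp add: algebra_simps)
    then show ?thesis unfolding disc_partial_sum_telescope by simp
  qed
  have lower: "V s0 \<le> disc_return \<gamma> K \<pi> u s0" if K: "admissible D \<beta> Po K" for K
  proof (rule LIMSEQ_le_const[OF disc_return_limit[OF admissible_prob_simplex[OF K] discount]])
    have "0 \<le> inner_s (K t s (\<pi> s)) V - worst_inner D \<beta> Po s (\<pi> s) V" for t s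
      using K worst_inner_le by (simp add: admissible_def)
    then have "0 \<le> (\<Sum>t<n. \<gamma>^t * inner_s (occ K \<pi> s0 t)
                  (\<lambda>s. \<gamma> * (inner_s (K t s (\<pi> s)) V - worst_inner D \<beta> Po s (\<pi> s) V)))" for n
      using discount(1) occ_in_prob_simplex[OF admissible_prob_simplex[OF K]]
      by (intro sum_nonneg mult_nonneg_nonneg inner_s_nonneg) auto
    then show "\<exists>N. \<forall>n\<ge>N. V s0 \<le> ?S K n" unfolding S_eq by auto
  qed
  obtain Kw where Kw: "Kw s a \<in> Pset D \<beta> Po s a" "inner_s (Kw s a) V = worst_inner D \<beta> Po s a V"
    for s a
  proof -
    have "\<forall>s a. \<exists>p. p \<in> Pset D \<beta> Po s a \<and> inner_s p V = worst_inner D \<beta> Po s a V"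
      by (metis worst_inner_attained)
    then show thesis using that by metis
  qed
  have worst: "admissible D \<beta> Po (\<lambda>_. Kw)" using Kw by (simp add: admissible_def)
  have "?S (\<lambda>_. Kw) = (\<lambda>n. V s0)" unfolding S_eq Kw(2) by (simp add: inner_s_def)
  moreover have "?S (\<lambda>_. Kw) \<longlonglongrightarrow> disc_return \<gamma> (\<lambda>_. Kw) \<pi> u s0"
    by (rule disc_return_limit[OF admissible_prob_simplex[OF worst] discount])
  ultimately have worst_return: "disc_return \<gamma> (\<lambda>_. Kw) \<pi> u s0 = V s0"
    by (simp add: LIMSEQ_const_iff)
  show "robust_V D \<beta> Po \<gamma> \<pi> u s0 = V s0"
    unfolding robust_V_def
  proof (rule cInf_eq_minimum)
    show "V s0 \<in> {disc_return \<gamma> K \<pi> u s0 |K. admissible D \<beta> Po K}"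
      using worst worst_return by force
  qed (use lower in blast)
qed

lemma robust_V_bellman:
  "robust_bellman D \<beta> Po \<gamma> \<pi> u (robust_V D \<beta> Po \<gamma> \<pi> u) = robust_V D \<beta> Po \<gamma> \<pi> u"
proof -
  obtain V where V: "robust_bellman D \<beta> Po \<gamma> \<pi> u V = V"
    using sup_contraction_has_fixpoint[OF robust_bellman_sup_contraction discount] .
  moreover have "robust_V D \<beta> Po \<gamma> \<pi> u = V" using V by (rule robust_V_eq_fixpoint)
  ultimately show ?thesis by simp
qed

end

lemma Tpi_diff:
  "Tpi D \<beta> Po \<gamma> r g m lam \<pi> v s - Tpi D \<beta> Po \<gamma> r g m lam \<pi> v' s
     = \<gamma> * inner_s (Po s (\<pi> s)) (\<lambda>s'. v s' - v' s')"
  by (simp add: Tpi_def inner_s_diff_right algebra_simps)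

locale stochastic_kernel =
  fixes Po :: "'s::finite \<Rightarrow> 'a::finite \<Rightarrow> 's \<Rightarrow> real"
  assumes stochastic: "\<And>s a. Po s a \<in> prob_simplex"
begin

lemma Tpi_mono:
  assumes "0 \<le> \<gamma>" "\<And>s. v' s \<le> v s"
  shows "Tpi D \<beta> Po \<gamma> r g m lam \<pi> v' s \<le> Tpi D \<beta> Po \<gamma> r g m lam \<pi> v s"
proof -
  have "0 \<le> \<gamma> * inner_s (Po s (\<pi> s)) (\<lambda>s'. v s' - v' s')"
    using assms by (simp add: inner_s_nonneg stochastic)
  then show ?thesis using Tpi_diff[of D \<beta> Po \<gamma> r g m lam \<pi> v s v'] by linarith
qed

lemma Tpi_add_const:
  "Tpi D \<beta> Po \<gamma> r g m lam \<pi> (\<lambda>s'. v s' + c) s = Tpi D \<beta> Po \<gamma> r g m lam \<pi> v s + \<gamma> * c"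
  using Tpi_diff[of D \<beta> Po \<gamma> r g m lam \<pi> "\<lambda>s'. v s' + c" s v] by (simp add: inner_s_const stochastic)

lemma Tpi_sup_contraction:
  assumes "0 \<le> \<gamma>"
  shows "sup_contraction \<gamma> (Tpi D \<beta> Po \<gamma> r g m lam \<pi>)"
proof (rule sup_contractionI)
  fix v v' :: "'s \<Rightarrow> real" and d s
  assume "\<And>s. \<bar>v s - v' s\<bar> \<le> d"
  then have "\<bar>inner_s (Po s (\<pi> s)) (\<lambda>s'. v s' - v' s')\<bar> \<le> d" by (rule abs_inner_s_le[OF stochastic])
  then show "\<bar>Tpi D \<beta> Po \<gamma> r g m lam \<pi> v s - Tpi D \<beta> Po \<gamma> r g m lam \<pi> v' s\<bar> \<le> \<gamma> * d"
    unfolding Tpi_diff using assms by (simp add: abs_mult mult_left_mono)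
qed

lemma Tstar_mono:
  assumes "0 \<le> \<gamma>" "\<And>s. v' s \<le> v s"
  shows "Tstar D \<beta> Po \<gamma> r g m lam v' s \<le> Tstar D \<beta> Po \<gamma> r g m lam v s"
  unfolding Tstar_def by (intro Max_range_mono Tpi_mono assms)

lemma Tstar_add_const:
  "Tstar D \<beta> Po \<gamma> r g m lam (\<lambda>s'. v s' + c) s = Tstar D \<beta> Po \<gamma> r g m lam v s + \<gamma> * c"
  unfolding Tstar_def Tpi_add_const by (rule Max_range_add_const)

lemma Tstar_sup_contraction:
  assumes "0 \<le> \<gamma>"
  shows "sup_contraction \<gamma> (Tstar D \<beta> Po \<gamma> r g m lam)"
  unfolding Tstar_def[abs_def] by (intro sup_contraction_Max Tpi_sup_contraction assms)

end

context robust_mdp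
begin

lemma Tpi_robust_value_fixpoint:
  "Tpi D \<beta> Po \<gamma> r g m lam \<pi> (\<lambda>s. robust_V D \<beta> Po \<gamma> \<pi> r s - (\<Sum>i<m. lam i * robust_V D \<beta> Po \<gamma> \<pi> (g i) s))
   = (\<lambda>s. robust_V D \<beta> Po \<gamma> \<pi> r s - (\<Sum>i<m. lam i * robust_V D \<beta> Po \<gamma> \<pi> (g i) s))"
  (is "Tpi D \<beta> Po \<gamma> r g m lam \<pi> ?V = ?V")
proof
  fix s
  let ?P = "Po s (\<pi> s)" and ?Vr = "robust_V D \<beta> Po \<gamma> \<pi> r"
    and ?Vg = "\<lambda>i. robust_V D \<beta> Po \<gamma> \<pi> (g i)" and ?W = "worst_inner D \<beta> Po s (\<pi> s)"
  have bellman: "robust_V D \<beta> Po \<gamma> \<pi> u s = u s (\<pi> s) + \<gamma> * ?W (robust_V D \<beta> Po \<gamma> \<pi> u)" for u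
    using fun_cong[OF robust_V_bellman, of \<pi> u s] by (simp add: robust_bellman_def)
  have "Tpi D \<beta> Po \<gamma> r g m lam \<pi> ?V s
      = r s (\<pi> s) - (\<Sum>i<m. lam i * g i s (\<pi> s))
        + \<gamma> * (inner_s ?P ?Vr - (\<Sum>i<m. lam i * inner_s ?P (?Vg i)))
        + \<gamma> * (?W ?Vr - inner_s ?P ?Vr)
        - \<gamma> * (\<Sum>i<m. lam i * (?W (?Vg i) - inner_s ?P (?Vg i)))"
    unfolding Tpi_def diff_min_eq_worst_inner inner_s_lincomb ..
  also have "\<dots> = (r s (\<pi> s) + \<gamma> * ?W ?Vr) - (\<Sum>i<m. lam i * (g i s (\<pi> s) + \<gamma> * ?W (?Vg i)))"
    by (simp add: algebra_simps sum.distrib sum_subtractf sum_distrib_left)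
  also have "\<dots> = ?V s" unfolding bellman[symmetric] ..
  finally show "Tpi D \<beta> Po \<gamma> r g m lam \<pi> ?V s = ?V s" .
qed

end

theorem proposition3:
  fixes D :: "('s::finite \<Rightarrow> real) \<Rightarrow> ('s \<Rightarrow> real) \<Rightarrow> real"
    and \<beta> :: "'s \<Rightarrow> 'a::finite \<Rightarrow> real"
    and Po :: "'s \<Rightarrow> 'a \<Rightarrow> 's \<Rightarrow> real"
    and \<gamma> Rbar :: real
    and r :: "'s \<Rightarrow> 'a \<Rightarrow> real"
    and m :: nat
    and g :: "nat \<Rightarrow> 's \<Rightarrow> 'a \<Rightarrow> real"
    and \<tau> lam :: "nat \<Rightarrow> real"
  assumes gamma: "0 \<le> \<gamma>" "\<gamma> < 1"
    and nominal: "\<And>s a. Po s a \<in> prob_simplex"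
    and attained: "\<And>s a w. \<exists>p\<in>Pset D \<beta> Po s a.
                      \<forall>q\<in>Pset D \<beta> Po s a. inner_s p w \<le> inner_s q w"
    and r_bnd: "\<And>s a. 0 \<le> r s a \<and> r s a \<le> Rbar"
    and g_bnd: "\<And>i s a. i < m \<Longrightarrow> 0 \<le> g i s a \<and> g i s a \<le> \<tau> i"
    and lam_nonneg: "\<And>i. i < m \<Longrightarrow> 0 \<le> lam i"
  shows
    "(\<forall>v1 v2. (\<forall>s. v2 s \<le> v1 s) \<longrightarrow>
        (\<forall>\<pi> s. Tpi D \<beta> Po \<gamma> r g m lam \<pi> v2 s \<le> Tpi D \<beta> Po \<gamma> r g m lam \<pi> v1 s) \<and>
        (\<forall>s. Tstar D \<beta> Po \<gamma> r g m lam v2 s \<le> Tstar D \<beta> Po \<gamma> r g m lam v1 s))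
     \<and> (\<forall>v c. (\<forall>\<pi> s. Tpi D \<beta> Po \<gamma> r g m lam \<pi> (\<lambda>s'. v s' + c) s
                     = Tpi D \<beta> Po \<gamma> r g m lam \<pi> v s + \<gamma> * c) \<and>
              (\<forall>s. Tstar D \<beta> Po \<gamma> r g m lam (\<lambda>s'. v s' + c) s
                     = Tstar D \<beta> Po \<gamma> r g m lam v s + \<gamma> * c))
     \<and> (\<forall>v1 v2.
          (\<forall>\<pi>. supnorm (\<lambda>s. Tpi D \<beta> Po \<gamma> r g m lam \<pi> v1 s - Tpi D \<beta> Po \<gamma> r g m lam \<pi> v2 s)
                 \<le> \<gamma> * supnorm (\<lambda>s. v1 s - v2 s)) \<and>
          supnorm (\<lambda>s. Tstar D \<beta> Po \<gamma> r g m lam v1 s - Tstar D \<beta> Po \<gamma> r g m lam v2 s)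
                 \<le> \<gamma> * supnorm (\<lambda>s. v1 s - v2 s))
     \<and> (\<forall>\<pi>. let V = (\<lambda>s. robust_V D \<beta> Po \<gamma> \<pi> r s
                          - (\<Sum>i<m. lam i * robust_V D \<beta> Po \<gamma> \<pi> (g i) s))
           in Tpi D \<beta> Po \<gamma> r g m lam \<pi> V = V \<and>
              (\<forall>v. Tpi D \<beta> Po \<gamma> r g m lam \<pi> v = v \<longrightarrow> v = V))"
proof -
  interpret robust_mdp D \<beta> Po \<gamma> using gamma attained by unfold_locales
  interpret stochastic_kernel Po using nominal by unfold_locales
  let ?T = "Tpi D \<beta> Po \<gamma> r g m lam" and ?T' = "Tstar D \<beta> Po \<gamma> r g m lam"
  have contraction: "sup_contraction \<gamma> (?T \<pi>)" for \<pi>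
    by (rule Tpi_sup_contraction[OF gamma(1)])
  have "\<forall>v1 v2. (\<forall>s. v2 s \<le> v1 s) \<longrightarrow> (\<forall>\<pi> s. ?T \<pi> v2 s \<le> ?T \<pi> v1 s) \<and> (\<forall>s. ?T' v2 s \<le> ?T' v1 s)"
    by (intro allI impI conjI Tpi_mono[OF gamma(1)] Tstar_mono[OF gamma(1)]) auto
  moreover have "\<forall>v c. (\<forall>\<pi> s. ?T \<pi> (\<lambda>s'. v s' + c) s = ?T \<pi> v s + \<gamma> * c)
                    \<and> (\<forall>s. ?T' (\<lambda>s'. v s' + c) s = ?T' v s + \<gamma> * c)"
    by (simp add: Tpi_add_const Tstar_add_const)
  moreover have "\<forall>v1 v2. (\<forall>\<pi>. supnorm (\<lambda>s. ?T \<pi> v1 s - ?T \<pi> v2 s) \<le> \<gamma> * supnorm (\<lambda>s. v1 s - v2 s))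
                    \<and> supnorm (\<lambda>s. ?T' v1 s - ?T' v2 s) \<le> \<gamma> * supnorm (\<lambda>s. v1 s - v2 s)"
    by (intro allI conjI supnorm_sup_contraction contraction Tstar_sup_contraction[OF gamma(1)])
  moreover have "v = (\<lambda>s. robust_V D \<beta> Po \<gamma> \<pi> r s - (\<Sum>i<m. lam i * robust_V D \<beta> Po \<gamma> \<pi> (g i) s))"
    if "?T \<pi> v = v" for \<pi> v
    by (rule sup_contraction_fixpoint_unique[OF contraction gamma(2) that Tpi_robust_value_fixpoint])
  ultimately show ?thesis unfolding Let_def by (simp add: Tpi_robust_value_fixpoint)
qed

end
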